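(* If $\Gamma$ is a graph of order $n$ and minimum degree $\delta>0$, then $\gamma_0^o(\Gamma)\le\frac{n}{2}$.
   Context: Graphs are finite and simple. For $S\subseteq V$ and $v\in V$, $\delta_S(v)$ is the number of neighbours of $v$ in $S$, $\overline{S}=V\setminus S$, and $\partial(S)$ the set of vertices of $\overline{S}$ with a neighbour in $S$. A nonempty $S$ is an offensive $0$-alliance if $\delta_S(v)\ge\delta_{\overline{S}}(v)$ for all $v\in\partial(S)$, and a global offensive $0$-alliance if moreover it is dominating. $\gamma_0^o(\Gamma)$ denotes the minimum cardinality of a global offensive $0$-alliance in $\Gamma$. *)

theory Defs
  imports Complex_Main
begin

definition simple_graph :: "'a set \<Rightarrow> ('a \<Rightarrow> 'a \<Rightarrow> bool) \<Rightarrow> bool" where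
  "simple_graph V E \<longleftrightarrow> finite V \<and> (\<forall>u v. E u v \<longrightarrow> u \<in> V \<and> v \<in> V)
     \<and> (\<forall>u v. E u v \<longrightarrow> E v u) \<and> (\<forall>v. \<not> E v v)"

definition neighbours :: "'a set \<Rightarrow> ('a \<Rightarrow> 'a \<Rightarrow> bool) \<Rightarrow> 'a \<Rightarrow> 'a set" where
  "neighbours V E v = {u \<in> V. E v u}"

definition degree :: "'a set \<Rightarrow> ('a \<Rightarrow> 'a \<Rightarrow> bool) \<Rightarrow> 'a \<Rightarrow> nat" where
  "degree V E v = card (neighbours V E v)"

definition min_degree :: "'a set \<Rightarrow> ('a \<Rightarrow> 'a \<Rightarrow> bool) \<Rightarrow> nat" where
  "min_degree V E = Min (degree V E ` V)"

definition delta_in :: "'a set \<Rightarrow> ('a \<Rightarrow> 'a \<Rightarrow> bool) \<Rightarrow> 'a set \<Rightarrow> 'a \<Rightarrow> nat" where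
  "delta_in V E S v = card (neighbours V E v \<inter> S)"

definition boundary :: "'a set \<Rightarrow> ('a \<Rightarrow> 'a \<Rightarrow> bool) \<Rightarrow> 'a set \<Rightarrow> 'a set" where
  "boundary V E S = {v \<in> V - S. \<exists>u \<in> S. E v u}"

definition offensive_0_alliance :: "'a set \<Rightarrow> ('a \<Rightarrow> 'a \<Rightarrow> bool) \<Rightarrow> 'a set \<Rightarrow> bool" where
  "offensive_0_alliance V E S \<longleftrightarrow> S \<noteq> {} \<and> S \<subseteq> V \<and>
     (\<forall>v \<in> boundary V E S. delta_in V E S v \<ge> delta_in V E (V - S) v)"

definition dominating :: "'a set \<Rightarrow> ('a \<Rightarrow> 'a \<Rightarrow> bool) \<Rightarrow> 'a set \<Rightarrow> bool" where
  "dominating V E S \<longleftrightarrow> S \<subseteq> V \<and> (\<forall>v \<in> V - S. \<exists>u \<in> S. E v u)"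

definition global_offensive_0_alliance :: "'a set \<Rightarrow> ('a \<Rightarrow> 'a \<Rightarrow> bool) \<Rightarrow> 'a set \<Rightarrow> bool" where
  "global_offensive_0_alliance V E S \<longleftrightarrow> offensive_0_alliance V E S \<and> dominating V E S"

definition gamma_o_0 :: "'a set \<Rightarrow> ('a \<Rightarrow> 'a \<Rightarrow> bool) \<Rightarrow> nat" where
  "gamma_o_0 V E = Min (card ` {S. global_offensive_0_alliance V E S})"

end

theory Submission
  imports Defs
begin

text \<open>Take a cut \<open>(S, V - S)\<close> with the maximum number of crossing edges. Moving a single
  vertex across changes the cut by the number of its neighbours on its own side minus the number
  on the other side, so by maximality every vertex has at least as many neighbours across the cut
  as on its own side. With no isolated vertices this makes each side dominating and an offensive
  \<open>0\<close>-alliance, and the smaller side has at most \<open>n/2\<close> vertices.\<close>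

definition cut_edges :: "'a set \<Rightarrow> ('a \<Rightarrow> 'a \<Rightarrow> bool) \<Rightarrow> 'a set \<Rightarrow> ('a \<times> 'a) set" where
  "cut_edges V E S = {(u, w). u \<in> S \<and> w \<in> V - S \<and> E u w}"

lemma finite_neighbours: "simple_graph V E \<Longrightarrow> finite (neighbours V E v)"
  unfolding simple_graph_def neighbours_def by auto

lemma neighbours_subset: "neighbours V E v \<subseteq> V"
  unfolding neighbours_def by auto

lemma neighbours_ne_if_min_degree_pos:
  assumes "simple_graph V E" "min_degree V E > 0" "v \<in> V"
  shows "neighbours V E v \<noteq> {}"
proof -
  have "min_degree V E \<le> degree V E v"
    using assms unfolding min_degree_def simple_graph_def by auto
  with assms(2) show ?thesis
    unfolding degree_def by auto
qed

lemma card_cut_edges_move_vertex: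
  assumes g: "simple_graph V E" and v: "v \<in> V"
  shows "card (cut_edges V E (insert v S)) + card (neighbours V E v \<inter> S)
       = card (cut_edges V E (S - {v})) + card (neighbours V E v \<inter> (V - S))"
proof -
  let ?N = "neighbours V E v"
  let ?R = "V - insert v S"
  define A where "A = {(u, w). u \<in> S - {v} \<and> w \<in> ?R \<and> E u w}"
  have fin_A: "finite A"
    using g unfolding A_def simple_graph_def
    by (auto intro: finite_subset[of _ "V \<times> V"])
  have fin_N: "finite ?N"
    using finite_neighbours[OF g] .
  have irrefl: "v \<notin> ?N"
    using g unfolding simple_graph_def neighbours_def by auto
  have sym: "E u v \<longleftrightarrow> u \<in> ?N" for u
    using g unfolding simple_graph_def neighbours_def by auto
  have "cut_edges V E (insert v S) = A \<union> Pair v ` (?N \<inter> ?R)"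
    unfolding cut_edges_def A_def neighbours_def by auto
  moreover have "cut_edges V E (S - {v}) = A \<union> (\<lambda>u. (u, v)) ` (?N \<inter> (S - {v}))"
    using v sym unfolding cut_edges_def A_def by auto
  moreover have "A \<inter> Pair v ` (?N \<inter> ?R) = {}" "A \<inter> (\<lambda>u. (u, v)) ` (?N \<inter> (S - {v})) = {}"
    unfolding A_def by auto
  moreover have "?N \<inter> ?R = ?N \<inter> (V - S)" "?N \<inter> (S - {v}) = ?N \<inter> S"
    using irrefl by auto
  ultimately show ?thesis
    using fin_A fin_N by (simp add: card_Un_disjoint card_image inj_on_def)
qed

lemma max_cut_neighbours_across:
  assumes g: "simple_graph V E" and S: "S \<subseteq> V"
    and max: "\<And>T. T \<subseteq> V \<Longrightarrow> card (cut_edges V E T) \<le> card (cut_edges V E S)"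
  shows "v \<in> S \<Longrightarrow> card (neighbours V E v \<inter> S) \<le> card (neighbours V E v \<inter> (V - S))"
    and "v \<in> V - S \<Longrightarrow> card (neighbours V E v \<inter> (V - S)) \<le> card (neighbours V E v \<inter> S)"
proof -
  assume v: "v \<in> S"
  then have "insert v S = S" by auto
  moreover have "S - {v} \<subseteq> V" using S by auto
  ultimately show "card (neighbours V E v \<inter> S) \<le> card (neighbours V E v \<inter> (V - S))"
    using card_cut_edges_move_vertex[OF g, of v S] max[of "S - {v}"] v S by auto
next
  assume v: "v \<in> V - S"
  then have "S - {v} = S" by auto
  with card_cut_edges_move_vertex[OF g, of v S] max[of "insert v S"] v S
  show "card (neighbours V E v \<inter> (V - S)) \<le> card (neighbours V E v \<inter> S)" by auto
qed

lemma global_offensive_0_alliance_if_outside_outvoted: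
  assumes g: "simple_graph V E" and "V \<noteq> {}" and S: "S \<subseteq> V"
    and no_isolated: "\<And>v. v \<in> V \<Longrightarrow> neighbours V E v \<noteq> {}"
    and outvoted: "\<And>v. v \<in> V - S \<Longrightarrow>
      card (neighbours V E v \<inter> (V - S)) \<le> card (neighbours V E v \<inter> S)"
  shows "global_offensive_0_alliance V E S"
proof -
  have hit: "neighbours V E v \<inter> S \<noteq> {}" if v: "v \<in> V - S" for v
  proof
    assume empty: "neighbours V E v \<inter> S = {}"
    then have "neighbours V E v \<inter> (V - S) = {}"
      using outvoted[OF v] finite_neighbours[OF g, of v] by simp
    with empty show False
      using no_isolated[of v] neighbours_subset[of V E v] v by blast
  qed
  have "S \<noteq> {}"
    using hit \<open>V \<noteq> {}\<close> by blast
  with S outvoted hit show ?thesis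
    unfolding global_offensive_0_alliance_def offensive_0_alliance_def dominating_def
      delta_in_def boundary_def neighbours_def by blast
qed

lemma gamma_o_0_le_card:
  assumes "simple_graph V E" and "global_offensive_0_alliance V E S"
  shows "gamma_o_0 V E \<le> card S"
proof -
  have "card ` {S. global_offensive_0_alliance V E S} \<subseteq> card ` Pow V"
    unfolding global_offensive_0_alliance_def offensive_0_alliance_def by auto
  then have "finite (card ` {S. global_offensive_0_alliance V E S})"
    using assms(1) unfolding simple_graph_def by (simp add: finite_subset)
  with assms(2) show ?thesis
    unfolding gamma_o_0_def by (intro Min_le) auto
qed

lemma ex_max_cut:
  assumes "simple_graph V E"
  obtains S where "S \<subseteq> V" "\<And>T. T \<subseteq> V \<Longrightarrow> card (cut_edges V E T) \<le> card (cut_edges V E S)"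
proof -
  let ?cut = "\<lambda>T. card (cut_edges V E T)"
  have fin: "finite (?cut ` Pow V)"
    using assms unfolding simple_graph_def by simp
  have "Max (?cut ` Pow V) \<in> ?cut ` Pow V"
    using fin by (intro Max_in) auto
  then obtain S where "S \<subseteq> V" "?cut S = Max (?cut ` Pow V)"
    by auto
  with fin show ?thesis
    by (intro that) auto
qed

theorem mainTheorem7:
  fixes V :: "'a set" and E :: "'a \<Rightarrow> 'a \<Rightarrow> bool"
  assumes "simple_graph V E"
    and "V \<noteq> {}"
    and "min_degree V E > 0"
  shows "real (gamma_o_0 V E) \<le> real (card V) / 2"
proof -
  note g = assms(1)
  have no_isolated: "\<And>v. v \<in> V \<Longrightarrow> neighbours V E v \<noteq> {}"
    using neighbours_ne_if_min_degree_pos[OF g assms(3)] .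
  obtain S where S: "S \<subseteq> V"
    and max: "\<And>T. T \<subseteq> V \<Longrightarrow> card (cut_edges V E T) \<le> card (cut_edges V E S)"
    using ex_max_cut[OF g] by blast
  have "global_offensive_0_alliance V E S"
    using max_cut_neighbours_across(2)[OF g S max]
    by (intro global_offensive_0_alliance_if_outside_outvoted[OF g assms(2) S no_isolated])
  then have le_S: "gamma_o_0 V E \<le> card S"
    using gamma_o_0_le_card[OF g] by blast
  have "global_offensive_0_alliance V E (V - S)"
    using max_cut_neighbours_across(1)[OF g S max] S double_diff[OF S subset_refl]
    by (intro global_offensive_0_alliance_if_outside_outvoted[OF g assms(2) _ no_isolated]) auto
  then have le_compl: "gamma_o_0 V E \<le> card (V - S)"
    using gamma_o_0_le_card[OF g] by blast
  have "card S + card (V - S) = card V"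
    using g S unfolding simple_graph_def by (metis card_Diff_subset card_mono finite_subset le_add_diff_inverse)
  with le_S le_compl show ?thesis
    by linarith
qed

end
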